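(* Let $G$ be a torsion-free discrete group such that the $\ell^1$ Hattori–Stallings trace $HS^1:K_0(\ell^1(G))\to\ell^1([G])$ takes its values in $\bigoplus_{\mathrm{FC}(G)}\mathbb{C}$. Then $\ell^1(G)$ contains no idempotent other than $0$ and $1$.
   Context: $[G]$ is the set of conjugacy classes of $G$, $\mathrm{FC}(G)$ the subset of classes of finite order elements (here just $\{[1]\}$). $\ell^1(G)$ is the Banach convolution algebra of absolutely summable functions $a=\sum a_g g$ on $G$, and $\ell^1([G])$ the Banach space of absolutely summable functions on $[G]$. $HS^1$ is induced on $K_0$ by the trace $p(a)=\sum_{[x]}\big(\sum_{g\in[x]}a_g\big)[x]$ applied to the diagonal of idempotent matrices. *)

theory Defs
  imports "HOL-Analysis.Analysis"
begin

text \<open>The discrete group G is modelled as a type 'g of class group_add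
  (additive notation, NOT assumed commutative): group product is +,
  identity is 0, inverse is unary minus.\<close>

definition torsion_free :: "'g::group_add itself \<Rightarrow> bool" where
  "torsion_free _ \<longleftrightarrow> (\<forall>x::'g. \<forall>n::nat. n > 0 \<longrightarrow> ((+) x ^^ n) 0 = 0 \<longrightarrow> x = 0)"

definition finite_order :: "'g::group_add \<Rightarrow> bool" where
  "finite_order x \<longleftrightarrow> (\<exists>n::nat. n > 0 \<and> ((+) x ^^ n) 0 = 0)"

definition l1 :: "('g \<Rightarrow> complex) \<Rightarrow> bool" where
  "l1 a \<longleftrightarrow> (\<lambda>g. norm (a g)) summable_on UNIV"

definition conv :: "('g::group_add \<Rightarrow> complex) \<Rightarrow> ('g \<Rightarrow> complex) \<Rightarrow> 'g \<Rightarrow> complex" where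
  "conv a b = (\<lambda>g. \<Sum>\<^sub>\<infinity>h. a h * b (- h + g))"

definition l1_one :: "'g::group_add \<Rightarrow> complex" where
  "l1_one = (\<lambda>g. if g = 0 then 1 else 0)"

text \<open>n x n matrices over l^1(G), entries E i j for i,j < n.\<close>
definition mat_mult :: "nat \<Rightarrow> (nat \<Rightarrow> nat \<Rightarrow> 'g::group_add \<Rightarrow> complex)
    \<Rightarrow> (nat \<Rightarrow> nat \<Rightarrow> 'g \<Rightarrow> complex) \<Rightarrow> nat \<Rightarrow> nat \<Rightarrow> 'g \<Rightarrow> complex" where
  "mat_mult n E F = (\<lambda>i j g. \<Sum>k<n. conv (E i k) (F k j) g)"

definition idem_mat :: "nat \<Rightarrow> (nat \<Rightarrow> nat \<Rightarrow> 'g::group_add \<Rightarrow> complex) \<Rightarrow> bool" where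
  "idem_mat n E \<longleftrightarrow> (\<forall>i<n. \<forall>j<n. l1 (E i j) \<and> mat_mult n E E i j = E i j)"

definition conj_class :: "'g::group_add \<Rightarrow> 'g set" where
  "conj_class x = {g + x - g | g. True}"

definition conj_classes :: "'g::group_add set set" where
  "conj_classes = range conj_class"

definition FC :: "'g::group_add set set" where
  "FC = {conj_class x | x. finite_order x}"

text \<open>Hattori-Stallings trace of an idempotent matrix E:
  p(sum_i E_ii), a function on [G], HS(E)([x]) = sum_{g in [x]} sum_i E_ii(g).\<close>
definition HS1 :: "nat \<Rightarrow> (nat \<Rightarrow> nat \<Rightarrow> 'g::group_add \<Rightarrow> complex) \<Rightarrow> 'g set \<Rightarrow> complex" where
  "HS1 n E C = (\<Sum>\<^sub>\<infinity>g\<in>C. \<Sum>i<n. E i i g)"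

text \<open>A function on [G] lies in the direct sum over FC(G) of C:
  finitely supported, support contained in FC(G).\<close>
definition in_FC_sum :: "('g::group_add set \<Rightarrow> complex) \<Rightarrow> bool" where
  "in_FC_sum f \<longleftrightarrow> finite {C \<in> conj_classes. f C \<noteq> 0} \<and> {C \<in> conj_classes. f C \<noteq> 0} \<subseteq> FC"

end

theory Submission
  imports Defs
begin

text \<open>
  Let e be an idempotent of l1(G).  The augmentation aug(e) = sum of all coefficients is
  multiplicative, hence 0 or 1.  The Hattori-Stallings hypothesis, applied to e viewed as a
  1x1 idempotent matrix, says that the class sums of e vanish outside FC(G) = {[0]}, so
  aug(e) equals the canonical trace tau(e) = e(0).  The theorem then follows from Kaplansky's
  positivity of the trace, proved here directly inside l1(G): an idempotent with tau(e) = 0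
  vanishes (apply it to e and to 1 - e).

  The positivity argument uses the l2 inner product <x,y> = tau(x y*).  With s = e + e* - 1
  one has s^2 = 1 + (e - e*)(e - e*)^* >= 1, s^2 commutes with e and e s^2 = e e* e.  For
  small c > 0 the element r = 1 - c s^2 is a positive contraction on l2, and the geometric
  series for r gives tau(e) - tau(r^N e) = c * sum_{k<N} <r^k e, e>, a sum of non-negative
  terms whose first term is |e|_2^2.  If tau(e) = 0 this forces c |e|_2^2 <= |tau(r^N e)|,
  whereas |tau(r^N e)|^2 <= |r^N e|_2^2 <= (1-c)^N |e|_2^2 tends to 0; hence e = 0.
\<close>

section \<open>Absolute summability behind convolution\<close>

lemma l1_norm_le:
  assumes "l1 c" shows "norm (c x) \<le> (\<Sum>\<^sub>\<infinity>y. norm (c y))"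
proof -
  have "(\<Sum>\<^sub>\<infinity>y\<in>{x}. norm (c y)) \<le> (\<Sum>\<^sub>\<infinity>y. norm (c y))"
    by (rule infsum_mono_neutral) (use assms in \<open>auto simp: l1_def\<close>)
  then show ?thesis by simp
qed

lemma l1_tensor_abs_summable:
  fixes a b :: "'a \<Rightarrow> complex"
  assumes "l1 a" "l1 b"
  shows "(\<lambda>p. norm (a (fst p)) * norm (b (snd p))) summable_on UNIV"
proof -
  have "(\<lambda>p. norm ((\<lambda>(h::'a,k::'a). a h * b k) p)) summable_on (Sigma UNIV (\<lambda>_. UNIV))"
  proof (rule Infinite_Sum.abs_summable_on_Sigma_iff[THEN iffD2], intro conjI ballI)
    fix h show "(\<lambda>k. norm ((\<lambda>(h,k). a h * b k) (h, k))) summable_on UNIV"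
      using assms(2) by (simp add: l1_def norm_mult summable_on_cmult_right)
  next
    have "(\<lambda>h. norm (a h) * (\<Sum>\<^sub>\<infinity>k. norm (b k))) summable_on UNIV"
      using assms(1) by (simp add: l1_def summable_on_cmult_left)
    then show "(\<lambda>h. norm (\<Sum>\<^sub>\<infinity>k. norm ((\<lambda>(h,k). a h * b k) (h, k)))) summable_on UNIV"
      by (simp add: norm_mult infsum_cmult_right' infsum_nonneg)
  qed
  then show ?thesis by (simp add: norm_mult case_prod_unfold)
qed

lemma abs_summable_pair_slices:
  fixes F :: "'a \<times> 'b \<Rightarrow> complex"
  assumes "(\<lambda>p. norm (F p)) summable_on UNIV"
  shows "(\<lambda>y. norm (F (x,y))) summable_on UNIV"
    and "(\<lambda>x. \<Sum>\<^sub>\<infinity>y. norm (F (x,y))) summable_on UNIV"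
proof -
  have "(\<lambda>p. norm (F p)) summable_on Sigma UNIV (\<lambda>_. UNIV)" using assms by simp
  then have *: "(\<forall>x\<in>UNIV. (\<lambda>y. norm (F (x, y))) summable_on UNIV) \<and>
             ((\<lambda>x. norm (\<Sum>\<^sub>\<infinity>y. norm (F (x, y)))) summable_on UNIV)"
    using Infinite_Sum.abs_summable_on_Sigma_iff[of F UNIV "\<lambda>_. UNIV"] by simp
  then show "(\<lambda>y. norm (F (x,y))) summable_on UNIV" by simp
  from * show "(\<lambda>x. \<Sum>\<^sub>\<infinity>y. norm (F (x,y))) summable_on UNIV" by (simp add: infsum_nonneg)
qed

lemma bij_conv_kernel: "bij_betw (\<lambda>p::'g::group_add \<times> 'g. (snd p, - snd p + fst p)) UNIV UNIV"
  by (rule bij_betwI[where g="\<lambda>q. (fst q + snd q, fst q)"]) (auto simp: prod_eq_iff)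

lemma bij_conv_kernel': "bij_betw (\<lambda>p::'g::group_add \<times> 'g. (fst p, - fst p + snd p)) UNIV UNIV"
  by (rule bij_betwI[where g="\<lambda>q. (fst q, fst q + snd q)"]) (auto simp: prod_eq_iff)

lemma bij_left_translation: "bij_betw (\<lambda>k::'g::group_add. h + k) UNIV UNIV"
  by (rule bij_betwI[where g="\<lambda>k. - h + k"]) auto

lemma bij_group_inverse: "bij_betw (\<lambda>k::'g::group_add. - k) UNIV UNIV"
  by (rule bij_betwI[where g="\<lambda>k. - k"]) auto

lemma conv_kernel_abs_summable:
  fixes a b :: "'g::group_add \<Rightarrow> complex"
  assumes "l1 a" "l1 b"
  shows "(\<lambda>p. norm (a (snd p) * b (- snd p + fst p))) summable_on UNIV"
proof -
  have "(\<lambda>p. (\<lambda>q. norm (a (fst q)) * norm (b (snd q))) ((\<lambda>p. (snd p, - snd p + fst p)) p))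
          summable_on UNIV"
    using summable_on_reindex_bij_betw[OF bij_conv_kernel, of "\<lambda>q. norm (a (fst q)) * norm (b (snd q))"]
      l1_tensor_abs_summable[OF assms]
    by simp
  then show ?thesis by (simp add: norm_mult)
qed

lemma conv_kernel_abs_summable':
  fixes a b :: "'g::group_add \<Rightarrow> complex"
  assumes "l1 a" "l1 b"
  shows "(\<lambda>p. norm (a (fst p) * b (- fst p + snd p))) summable_on UNIV"
proof -
  have "(\<lambda>p. (\<lambda>q. norm (a (fst q)) * norm (b (snd q))) ((\<lambda>p. (fst p, - fst p + snd p)) p))
          summable_on UNIV"
    using summable_on_reindex_bij_betw[OF bij_conv_kernel', of "\<lambda>q. norm (a (fst q)) * norm (b (snd q))"]
      l1_tensor_abs_summable[OF assms]
    by simp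
  then show ?thesis by (simp add: norm_mult)
qed

lemma conv_slice_abs_summable:
  fixes a b :: "'g::group_add \<Rightarrow> complex"
  assumes "l1 a" "l1 b"
  shows "(\<lambda>h. norm (a h * b (-h+g))) summable_on UNIV"
  using abs_summable_pair_slices(1)[OF conv_kernel_abs_summable[OF assms], of g] by simp

lemma conv_slice_summable:
  fixes a b :: "'g::group_add \<Rightarrow> complex"
  assumes "l1 a" "l1 b"
  shows "(\<lambda>h. a h * b (-h+g)) summable_on UNIV"
  by (rule Infinite_Sum.abs_summable_summable[OF conv_slice_abs_summable[OF assms]])

lemma l1_conv:
  fixes a b :: "'g::group_add \<Rightarrow> complex"
  assumes "l1 a" "l1 b"
  shows "l1 (conv a b)"
  unfolding l1_def
proof (rule summable_on_comparison_test)
  show "(\<lambda>g. \<Sum>\<^sub>\<infinity>h. norm (a h * b (-h+g))) summable_on UNIV"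
    using abs_summable_pair_slices(2)[OF conv_kernel_abs_summable[OF assms]] by simp
  fix g show "norm (conv a b g) \<le> (\<Sum>\<^sub>\<infinity>h. norm (a h * b (-h+g)))"
    unfolding conv_def using conv_slice_abs_summable[OF assms] by (simp add: norm_infsum_bound)
qed simp

section \<open>Algebraic identities for convolution\<close>

lemma infsum_conv:
  fixes a b :: "'g::group_add \<Rightarrow> complex"
  assumes "l1 a" "l1 b"
  shows "(\<Sum>\<^sub>\<infinity>g. conv a b g) = (\<Sum>\<^sub>\<infinity>g. a g) * (\<Sum>\<^sub>\<infinity>g. b g)"
proof -
  let ?F = "\<lambda>p. a (snd p) * b (- snd p + fst p)"
  let ?T = "\<lambda>q. a (fst q) * b (snd q)"
  have sF: "?F summable_on UNIV"
    by (rule Infinite_Sum.abs_summable_summable[OF conv_kernel_abs_summable[OF assms]])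
  have sT: "?T summable_on UNIV"
    by (rule Infinite_Sum.abs_summable_summable)
       (use l1_tensor_abs_summable[OF assms] in \<open>simp add: norm_mult\<close>)
  have "(\<Sum>\<^sub>\<infinity>g. conv a b g) = (\<Sum>\<^sub>\<infinity>g. \<Sum>\<^sub>\<infinity>h. (\<lambda>g h. ?F (g,h)) g h)"
    by (simp add: conv_def)
  also have "\<dots> = infsum (\<lambda>(g,h). ?F (g,h)) (Sigma UNIV (\<lambda>_. UNIV))"
    by (rule infsum_Sigma'_banach) (use sF in \<open>simp add: case_prod_unfold\<close>)
  also have "\<dots> = infsum ?T UNIV"
    using infsum_reindex_bij_betw[OF bij_conv_kernel, of ?T] by (simp add: case_prod_unfold)
  also have "\<dots> = (\<Sum>\<^sub>\<infinity>h. \<Sum>\<^sub>\<infinity>k. (\<lambda>h k. a h * b k) h k)"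
    using infsum_Sigma'_banach[of "\<lambda>h k. a h * b k" UNIV "\<lambda>_. UNIV"] sT
    by (simp add: case_prod_unfold)
  also have "\<dots> = (\<Sum>\<^sub>\<infinity>h. a h * (\<Sum>\<^sub>\<infinity>k. b k))"
    by (simp add: infsum_cmult_right')
  also have "\<dots> = (\<Sum>\<^sub>\<infinity>g. a g) * (\<Sum>\<^sub>\<infinity>g. b g)"
    by (simp add: infsum_cmult_left')
  finally show ?thesis .
qed

text \<open>Associativity of convolution on l1, by Fubini for an absolutely summable triple kernel.\<close>
lemma conv_assoc:
  fixes a b c :: "'g::group_add \<Rightarrow> complex"
  assumes a: "l1 a" and b: "l1 b" and c: "l1 c"
  shows "conv (conv a b) c = conv a (conv b c)"
proof
  fix g
  define T where "T = (\<lambda>h k. a h * b (- h + k) * c (- k + g))"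
  define C where "C = (\<Sum>\<^sub>\<infinity>y. norm (c y))"
  have "(\<lambda>p. norm (T (fst p) (snd p))) summable_on UNIV"
  proof (rule summable_on_comparison_test)
    show "(\<lambda>p. norm (a (fst p) * b (- fst p + snd p)) * C) summable_on UNIV"
      using conv_kernel_abs_summable'[OF a b] by (rule summable_on_cmult_left)
    fix p :: "'g \<times> 'g"
    have "norm (c (- snd p + g)) \<le> C" unfolding C_def by (rule l1_norm_le[OF c])
    then show "norm (T (fst p) (snd p)) \<le> norm (a (fst p) * b (- fst p + snd p)) * C"
      unfolding T_def by (simp add: norm_mult mult_left_mono)
  qed simp
  then have "(\<lambda>p. T (fst p) (snd p)) summable_on UNIV"
    by (rule Infinite_Sum.abs_summable_summable)
  then have sT: "(\<lambda>(h,k). T h k) summable_on UNIV \<times> UNIV"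
    by (simp add: case_prod_unfold)
  have "conv (conv a b) c g = (\<Sum>\<^sub>\<infinity>k. \<Sum>\<^sub>\<infinity>h. T h k)"
    unfolding T_def by (simp add: conv_def infsum_cmult_left')
  also have "\<dots> = (\<Sum>\<^sub>\<infinity>h. \<Sum>\<^sub>\<infinity>k. T h k)"
    using infsum_swap_banach[OF sT] by simp
  also have "\<dots> = (\<Sum>\<^sub>\<infinity>h. a h * (\<Sum>\<^sub>\<infinity>m. b m * c (- m + (- h + g))))"
  proof (rule infsum_cong)
    fix h
    have "(\<Sum>\<^sub>\<infinity>m. b m * c (- m + (- h + g)))
        = (\<Sum>\<^sub>\<infinity>k. (\<lambda>m. b m * c (- m + (- h + g))) (- h + k))"
      by (rule infsum_reindex_bij_betw[OF bij_left_translation, symmetric])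
    also have "\<dots> = (\<Sum>\<^sub>\<infinity>k. b (- h + k) * c (- k + g))"
      by (simp add: minus_add add.assoc)
    finally show "(\<Sum>\<^sub>\<infinity>k. T h k) = a h * (\<Sum>\<^sub>\<infinity>m. b m * c (- m + (- h + g)))"
      unfolding T_def by (simp add: infsum_cmult_right'[symmetric] mult.assoc)
  qed
  also have "\<dots> = conv a (conv b c) g"
    by (simp add: conv_def)
  finally show "conv (conv a b) c g = conv a (conv b c) g" .
qed

lemma conv_at_zero_commute: "conv a b 0 = conv b a (0::'g::group_add)"
proof -
  have "conv b a 0 = (\<Sum>\<^sub>\<infinity>h. b h * a (- h))" by (simp add: conv_def)
  also have "\<dots> = (\<Sum>\<^sub>\<infinity>k. (\<lambda>h. b h * a (- h)) (- k))"
    by (rule infsum_reindex_bij_betw[OF bij_group_inverse, symmetric])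
  also have "\<dots> = conv a b 0" by (simp add: conv_def mult.commute)
  finally show ?thesis by simp
qed

lemma conv_one_left:
  fixes b :: "'g::group_add \<Rightarrow> complex" shows "conv l1_one b = b"
proof
  fix g
  have "conv l1_one b g = (\<Sum>\<^sub>\<infinity>h\<in>{0}. (if h = 0 then 1 else 0) * b (- h + g))"
    unfolding conv_def l1_one_def by (rule infsum_cong_neutral) auto
  then show "conv l1_one b g = b g" by simp
qed

lemma conv_one_right:
  fixes b :: "'g::group_add \<Rightarrow> complex" shows "conv b l1_one = b"
proof
  fix g
  have "- h + g = 0 \<longleftrightarrow> h = g" for h :: 'g
    by (metis add_minus_cancel add.right_neutral)
  then have "conv b l1_one g = (\<Sum>\<^sub>\<infinity>h\<in>{g}. b h * (if - h + g = 0 then 1 else 0))"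
    unfolding conv_def l1_one_def by (intro infsum_cong_neutral) auto
  then show "conv b l1_one g = b g" by simp
qed

lemma conv_add_left:
  fixes a b c :: "'g::group_add \<Rightarrow> complex"
  assumes "l1 a" "l1 b" "l1 c"
  shows "conv (\<lambda>g. a g + b g) c = (\<lambda>g. conv a c g + conv b c g)"
  unfolding conv_def
  by (simp add: distrib_right infsum_add conv_slice_summable assms)

lemma conv_add_right:
  fixes a b c :: "'g::group_add \<Rightarrow> complex"
  assumes "l1 a" "l1 b" "l1 c"
  shows "conv c (\<lambda>g. a g + b g) = (\<lambda>g. conv c a g + conv c b g)"
  unfolding conv_def
  by (simp add: distrib_left infsum_add conv_slice_summable assms)

lemma conv_scale_left: "conv (\<lambda>g. z * a g) c = (\<lambda>g. z * conv a c g)"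
  unfolding conv_def by (simp add: mult.assoc infsum_cmult_right')

lemma conv_scale_right: "conv c (\<lambda>g. z * a g) = (\<lambda>g. z * conv c a g)"
  unfolding conv_def by (simp add: mult.left_commute infsum_cmult_right')

definition star :: "('g::group_add \<Rightarrow> complex) \<Rightarrow> 'g \<Rightarrow> complex" where
  "star a = (\<lambda>g. cnj (a (- g)))"

lemma star_conv: "star (conv a b) = conv (star b) (star a)"
proof
  fix g
  have "conv (star b) (star a) g = (\<Sum>\<^sub>\<infinity>k. cnj (b (- k)) * cnj (a (- g + k)))"
    by (simp add: conv_def star_def minus_add)
  also have "\<dots> = (\<Sum>\<^sub>\<infinity>h. (\<lambda>k. cnj (b (- k)) * cnj (a (- g + k))) (g + h))"
    by (rule infsum_reindex_bij_betw[OF bij_left_translation, symmetric])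
  also have "\<dots> = (\<Sum>\<^sub>\<infinity>h. cnj (a h * b (- h + - g)))"
    by (simp add: minus_add mult.commute)
  also have "\<dots> = star (conv a b) g"
    unfolding star_def conv_def by (subst infsum_cnj[symmetric]) (simp add: minus_add)
  finally show "star (conv a b) g = conv (star b) (star a) g" by simp
qed

lemma l1_zero: "l1 (\<lambda>_. 0)" by (simp add: l1_def)

lemma l1_add: "l1 a \<Longrightarrow> l1 b \<Longrightarrow> l1 (\<lambda>g. a g + b g)"
  unfolding l1_def
  by (rule summable_on_comparison_test[where f="\<lambda>g. norm (a g) + norm (b g)"])
     (auto intro: summable_on_add norm_triangle_ineq)

lemma l1_scale: "l1 a \<Longrightarrow> l1 (\<lambda>g. z * a g)"
  unfolding l1_def by (simp add: norm_mult summable_on_cmult_right)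

lemma l1_uminus: "l1 a \<Longrightarrow> l1 (\<lambda>g. - a g)"
  unfolding l1_def by simp

lemma l1_diff: "l1 a \<Longrightarrow> l1 b \<Longrightarrow> l1 (\<lambda>g. a g - b g)"
  using l1_add[of a "\<lambda>g. - b g"] l1_uminus[of b] by simp

lemma l1_one: "l1 (l1_one :: 'g::group_add \<Rightarrow> complex)"
  unfolding l1_def by (subst summable_on_cong_neutral[where T="{0}"]) (auto simp: l1_one_def)

lemma l1_star: "l1 a \<Longrightarrow> l1 (star a)"
  unfolding l1_def star_def
  using summable_on_reindex_bij_betw[OF bij_group_inverse, of "\<lambda>g. norm (a g)"] by simp

section \<open>The Banach algebra l1(G)\<close>

text \<open>The l1 functions form a type, which becomes a unital real algebra under convolution;
  this lets the positivity argument use ordinary ring notation.\<close>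
typedef 'g l1alg = "{a :: 'g \<Rightarrow> complex. l1 a}"
  morphisms rep Abs_l1alg
  by (rule exI[of _ "\<lambda>_. 0"]) (simp add: l1_zero)

setup_lifting type_definition_l1alg

lemma l1_rep: "l1 (rep x)" using rep by auto

instantiation l1alg :: (group_add) ring_1
begin
lift_definition zero_l1alg :: "'a l1alg" is "\<lambda>_. 0" by (simp add: l1_zero)
lift_definition one_l1alg :: "'a l1alg" is "l1_one" by (simp add: l1_one)
lift_definition plus_l1alg :: "'a l1alg \<Rightarrow> 'a l1alg \<Rightarrow> 'a l1alg" is "\<lambda>a b g. a g + b g"
  by (simp add: l1_add)
lift_definition uminus_l1alg :: "'a l1alg \<Rightarrow> 'a l1alg" is "\<lambda>a g. - a g"
  by (simp add: l1_uminus)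
lift_definition minus_l1alg :: "'a l1alg \<Rightarrow> 'a l1alg \<Rightarrow> 'a l1alg" is "\<lambda>a b g. a g - b g"
  by (simp add: l1_diff)
lift_definition times_l1alg :: "'a l1alg \<Rightarrow> 'a l1alg \<Rightarrow> 'a l1alg" is conv
  by (simp add: l1_conv)
instance
proof
  fix a b c :: "'a l1alg"
  show "a * b * c = a * (b * c)" by transfer (simp add: conv_assoc)
  show "a + b + c = a + (b + c)" by transfer (simp add: add.assoc)
  show "a + b = b + a" by transfer (simp add: add.commute)
  show "0 + a = a" by transfer simp
  show "- a + a = 0" by transfer simp
  show "a - b = a + - b" by transfer simp
  show "(a + b) * c = a * c + b * c" by transfer (simp add: conv_add_left)
  show "a * (b + c) = a * b + a * c" by transfer (simp add: conv_add_right)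
  show "1 * a = a" by transfer (simp add: conv_one_left)
  show "a * 1 = a" by transfer (simp add: conv_one_right)
  show "(0::'a l1alg) \<noteq> 1"
    by transfer (metis l1_one_def zero_neq_one)
qed
end

instantiation l1alg :: (group_add) real_algebra_1
begin
lift_definition scaleR_l1alg :: "real \<Rightarrow> 'a l1alg \<Rightarrow> 'a l1alg"
  is "\<lambda>r a g. complex_of_real r * a g"
  by (simp add: l1_scale)
instance
proof
  fix a b :: "'a l1alg" and r s :: real
  show "r *\<^sub>R (a + b) = r *\<^sub>R a + r *\<^sub>R b" by transfer (simp add: distrib_left)
  show "(r + s) *\<^sub>R a = r *\<^sub>R a + s *\<^sub>R a" by transfer (simp add: distrib_right)
  show "r *\<^sub>R s *\<^sub>R a = (r * s) *\<^sub>R a" by transfer (simp add: mult.assoc)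
  show "1 *\<^sub>R a = a" by transfer simp
  show "r *\<^sub>R a * b = r *\<^sub>R (a * b)" by transfer (simp add: conv_scale_left)
  show "a * r *\<^sub>R b = r *\<^sub>R (a * b)" by transfer (simp add: conv_scale_right)
qed
end

lift_definition adj :: "'g::group_add l1alg \<Rightarrow> 'g l1alg" is star by (simp add: l1_star)

definition tau :: "'g::group_add l1alg \<Rightarrow> complex" where "tau x = rep x 0"
definition augmentation :: "'g::group_add l1alg \<Rightarrow> complex" where
  "augmentation x = (\<Sum>\<^sub>\<infinity>g. rep x g)"
definition inner2 :: "'g::group_add l1alg \<Rightarrow> 'g l1alg \<Rightarrow> complex" where
  "inner2 x y = tau (x * adj y)"
definition norm2_sq :: "'g::group_add l1alg \<Rightarrow> real" where "norm2_sq x = Re (inner2 x x)"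
definition norm1 :: "'g::group_add l1alg \<Rightarrow> real" where "norm1 x = (\<Sum>\<^sub>\<infinity>g. norm (rep x g))"

lemma rep_plus: "rep (x + y) g = rep x g + rep y g" by transfer simp
lemma rep_minus: "rep (x - y) g = rep x g - rep y g" by transfer simp
lemma rep_zero: "rep 0 g = 0" by transfer simp
lemma rep_one: "rep 1 g = l1_one g" by transfer simp
lemma rep_times: "rep (x * y) = conv (rep x) (rep y)" by transfer simp
lemma rep_scaleR: "rep (r *\<^sub>R x) g = complex_of_real r * rep x g" by transfer simp

lemma tau_plus: "tau (x + y) = tau x + tau y" by (simp add: tau_def rep_plus)
lemma tau_minus: "tau (x - y) = tau x - tau y" by (simp add: tau_def rep_minus)
lemma tau_scaleR: "tau (r *\<^sub>R x) = complex_of_real r * tau x" by (simp add: tau_def rep_scaleR)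
lemma tau_one: "tau 1 = 1" by (simp add: tau_def rep_one l1_one_def)
lemma tau_sum: "tau (sum f A) = (\<Sum>k\<in>A. tau (f k))"
  by (induction A rule: infinite_finite_induct) (auto simp: tau_def rep_zero rep_plus)
lemma tau_commute: "tau (x * y) = tau (y * x)"
  by (simp add: tau_def rep_times conv_at_zero_commute)

lemma adj_adj: "adj (adj x) = x" by transfer (simp add: star_def)
lemma adj_mult: "adj (x * y) = adj y * adj x" by transfer (simp add: star_conv)
lemma adj_plus: "adj (x + y) = adj x + adj y" by transfer (simp add: star_def)
lemma adj_minus: "adj (x - y) = adj x - adj y" by transfer (simp add: star_def)
lemma adj_one: "adj 1 = (1 :: 'g::group_add l1alg)" by transfer (auto simp: star_def l1_one_def)
lemma adj_scaleR: "adj (r *\<^sub>R x) = r *\<^sub>R adj x" by transfer (simp add: star_def)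
lemma adj_power: "adj (x ^ n) = adj x ^ n"
  by (induction n) (simp_all add: adj_one adj_mult power_commutes)

lemma augmentation_mult: "augmentation (x * y) = augmentation x * augmentation y"
  by (simp add: augmentation_def rep_times infsum_conv l1_rep)

lemma inner2_adj: "inner2 (y * a) b = inner2 a (adj y * b)"
proof -
  have "inner2 (y * a) b = tau (y * (a * adj b))" by (simp add: inner2_def mult.assoc)
  also have "\<dots> = tau (a * adj b * y)" by (rule tau_commute)
  also have "\<dots> = inner2 a (adj y * b)" by (simp add: inner2_def adj_mult adj_adj mult.assoc)
  finally show ?thesis .
qed

lemma inner2_plus_left: "inner2 (x + y) z = inner2 x z + inner2 y z"
  by (simp add: inner2_def distrib_right tau_plus)
lemma inner2_minus_left: "inner2 (x - y) z = inner2 x z - inner2 y z"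
  by (simp add: inner2_def left_diff_distrib tau_minus)
lemma inner2_scaleR_left: "inner2 (r *\<^sub>R x) z = complex_of_real r * inner2 x z"
  by (simp add: inner2_def tau_scaleR)

section \<open>The l2 norm on l1(G)\<close>

lemma l1_square_summable:
  assumes "l1 a" shows "(\<lambda>g. (norm (a g))\<^sup>2) summable_on UNIV"
proof (rule summable_on_comparison_test)
  show "(\<lambda>g. norm (a g) * (\<Sum>\<^sub>\<infinity>y. norm (a y))) summable_on UNIV"
    using assms unfolding l1_def by (rule summable_on_cmult_left)
  fix g show "(norm (a g))\<^sup>2 \<le> norm (a g) * (\<Sum>\<^sub>\<infinity>y. norm (a y))"
    using l1_norm_le[OF assms, of g] by (simp add: power2_eq_square mult_left_mono)
qed simp

lemma inner2_as_sum: "inner2 x y = (\<Sum>\<^sub>\<infinity>g. rep x g * cnj (rep y g))"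
proof -
  have "inner2 x y = (\<Sum>\<^sub>\<infinity>h. rep x h * cnj (rep y (- (- h + 0))))"
    by (simp add: inner2_def tau_def rep_times adj.rep_eq conv_def star_def)
  then show ?thesis by simp
qed

lemma norm2_sq_as_sum: "norm2_sq x = (\<Sum>\<^sub>\<infinity>g. (norm (rep x g))\<^sup>2)"
proof -
  have s: "(\<lambda>g. rep x g * cnj (rep x g)) summable_on UNIV"
    by (rule Infinite_Sum.abs_summable_summable)
       (use l1_square_summable[OF l1_rep[of x]] in \<open>simp add: norm_mult power2_eq_square\<close>)
  have "norm2_sq x = (\<Sum>\<^sub>\<infinity>g. Re (rep x g * cnj (rep x g)))"
    unfolding norm2_sq_def inner2_as_sum by (rule infsum_Re[OF s, symmetric])
  also have "\<dots> = (\<Sum>\<^sub>\<infinity>g. (norm (rep x g))\<^sup>2)"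
    by (rule infsum_cong) (simp add: complex_mult_cnj cmod_def)
  finally show ?thesis .
qed

lemma norm2_sq_nonneg: "0 \<le> norm2_sq x"
  by (simp add: norm2_sq_as_sum infsum_nonneg)

lemma norm2_sq_coeff: "(norm (rep x g))\<^sup>2 \<le> norm2_sq x"
proof -
  have "(\<Sum>\<^sub>\<infinity>y\<in>{g}. (norm (rep x y))\<^sup>2) \<le> (\<Sum>\<^sub>\<infinity>y. (norm (rep x y))\<^sup>2)"
    by (rule infsum_mono_neutral) (use l1_square_summable[OF l1_rep[of x]] in auto)
  then show ?thesis by (simp add: norm2_sq_as_sum)
qed

lemma norm2_sq_eq_0: "norm2_sq x = 0 \<Longrightarrow> x = 0"
proof -
  assume "norm2_sq x = 0"
  then have "rep x g = 0" for g using norm2_sq_coeff[of x g] by simp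
  then show "x = 0" by transfer auto
qed

lemma tau_square_le: "(norm (tau x))\<^sup>2 \<le> norm2_sq x"
  unfolding tau_def by (rule norm2_sq_coeff)

lemma infsum_le_of_dominated:
  fixes f g :: "'a \<Rightarrow> real"
  assumes "g summable_on A" "\<And>x. x \<in> A \<Longrightarrow> 0 \<le> f x" "\<And>x. x \<in> A \<Longrightarrow> f x \<le> g x"
  shows "infsum f A \<le> infsum g A"
proof -
  have "f summable_on A" using summable_on_comparison_test[of g A f] assms by blast
  then show ?thesis using assms infsum_mono by blast
qed

text \<open>Translation invariance plus AM-GM: the l2 autocorrelation is maximal at 0.\<close>
lemma autocorrelation_le:
  fixes A :: "'g::group_add \<Rightarrow> complex"
  assumes A: "l1 A"
  shows "(\<Sum>\<^sub>\<infinity>g. norm (A (- h + g)) * norm (A g)) \<le> (\<Sum>\<^sub>\<infinity>g. (norm (A g))\<^sup>2)"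
proof -
  have s1: "(\<lambda>g. (norm (A g))\<^sup>2) summable_on UNIV" by (rule l1_square_summable[OF A])
  have s2: "(\<lambda>g. (norm (A (- h + g)))\<^sup>2) summable_on UNIV"
    using summable_on_reindex_bij_betw[OF bij_left_translation, of "\<lambda>g. (norm (A g))\<^sup>2" "- h"] s1
    by simp
  have e2: "(\<Sum>\<^sub>\<infinity>g. (norm (A (- h + g)))\<^sup>2) = (\<Sum>\<^sub>\<infinity>g. (norm (A g))\<^sup>2)"
    using infsum_reindex_bij_betw[OF bij_left_translation, of "\<lambda>g. (norm (A g))\<^sup>2" "- h"] by simp
  have "(\<Sum>\<^sub>\<infinity>g. norm (A (- h + g)) * norm (A g))
      \<le> (\<Sum>\<^sub>\<infinity>g. (1/2) * ((norm (A (- h + g)))\<^sup>2 + (norm (A g))\<^sup>2))"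
  proof (rule infsum_le_of_dominated)
    show "(\<lambda>g. (1/2) * ((norm (A (- h + g)))\<^sup>2 + (norm (A g))\<^sup>2)) summable_on UNIV"
      by (rule summable_on_cmult_right[OF summable_on_add[OF s2 s1]])
    fix g
    show "0 \<le> norm (A (- h + g)) * norm (A g)" by simp
    have "0 \<le> (norm (A (- h + g)) - norm (A g))\<^sup>2" by simp
    then show "norm (A (- h + g)) * norm (A g) \<le> (1/2) * ((norm (A (- h + g)))\<^sup>2 + (norm (A g))\<^sup>2)"
      by (simp add: power2_eq_square algebra_simps)
  qed
  also have "\<dots> = (1/2) * ((\<Sum>\<^sub>\<infinity>g. (norm (A (- h + g)))\<^sup>2) + (\<Sum>\<^sub>\<infinity>g. (norm (A g))\<^sup>2))"
    by (simp only: infsum_cmult_right' infsum_add[OF s2 s1])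
  also have "\<dots> = (\<Sum>\<^sub>\<infinity>g. (norm (A g))\<^sup>2)" by (simp add: e2)
  finally show ?thesis .
qed

lemma conv_pairing_abs_bound:
  fixes Y A B :: "'g::group_add \<Rightarrow> complex"
  assumes Y: "l1 Y" and A: "l1 A" and B: "l1 B"
  shows "norm (\<Sum>\<^sub>\<infinity>g. conv Y A g * cnj (B g))
           \<le> (\<Sum>\<^sub>\<infinity>h. norm (Y h) * (\<Sum>\<^sub>\<infinity>g. norm (A (- h + g)) * norm (B g)))"
proof -
  define nb where "nb = (\<Sum>\<^sub>\<infinity>g. norm (B g))"
  have nB: "norm (B g) \<le> nb" for g unfolding nb_def by (rule l1_norm_le[OF B])
  define S where "S = (\<lambda>g. \<Sum>\<^sub>\<infinity>h. norm (Y h * A (- h + g)))"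
  have sS: "S summable_on UNIV"
    unfolding S_def using abs_summable_pair_slices(2)[OF conv_kernel_abs_summable[OF Y A]] by simp
  have conv_le: "norm (conv Y A g) \<le> S g" for g
    unfolding conv_def S_def by (rule norm_infsum_bound[OF conv_slice_abs_summable[OF Y A]])
  have "norm (\<Sum>\<^sub>\<infinity>g. conv Y A g * cnj (B g)) \<le> (\<Sum>\<^sub>\<infinity>g. norm (conv Y A g * cnj (B g)))"
  proof (rule norm_infsum_bound, rule summable_on_comparison_test)
    show "(\<lambda>g. norm (conv Y A g) * nb) summable_on UNIV"
      using l1_conv[OF Y A] unfolding l1_def by (rule summable_on_cmult_left)
  qed (auto simp: norm_mult intro: mult_left_mono nB)
  also have "\<dots> \<le> (\<Sum>\<^sub>\<infinity>g. S g * norm (B g))"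
  proof (rule infsum_le_of_dominated)
    show "(\<lambda>g. S g * norm (B g)) summable_on UNIV"
      by (rule summable_on_comparison_test[OF summable_on_cmult_left[OF sS, of nb]])
         (auto simp: S_def infsum_nonneg intro: mult_left_mono nB)
  qed (auto simp: norm_mult intro: mult_right_mono conv_le)
  also have "\<dots> = (\<Sum>\<^sub>\<infinity>g. \<Sum>\<^sub>\<infinity>h. norm (Y h) * norm (A (- h + g)) * norm (B g))"
    unfolding S_def by (simp add: infsum_cmult_left'[symmetric] norm_mult)
  also have "\<dots> = (\<Sum>\<^sub>\<infinity>h. \<Sum>\<^sub>\<infinity>g. norm (Y h) * norm (A (- h + g)) * norm (B g))"
  proof (rule infsum_swap_banach)
    have "(\<lambda>p. norm (Y (snd p) * A (- snd p + fst p)) * nb) summable_on UNIV"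
      by (rule summable_on_cmult_left[OF conv_kernel_abs_summable[OF Y A]])
    then have "(\<lambda>p. norm (Y (snd p)) * norm (A (- snd p + fst p)) * norm (B (fst p)))
                 summable_on UNIV"
      by (rule summable_on_comparison_test) (auto simp: norm_mult intro: mult_left_mono nB)
    then show "(\<lambda>(g, h). norm (Y h) * norm (A (- h + g)) * norm (B g)) summable_on UNIV \<times> UNIV"
      by (simp add: case_prod_unfold)
  qed
  also have "\<dots> = (\<Sum>\<^sub>\<infinity>h. norm (Y h) * (\<Sum>\<^sub>\<infinity>g. norm (A (- h + g)) * norm (B g)))"
    by (simp add: infsum_cmult_right'[symmetric] mult.assoc)
  finally show ?thesis .
qed

lemma young_inequality: "Re (inner2 (y * a) a) \<le> norm1 y * norm2_sq a"
proof -
  have "Re (inner2 (y * a) a) \<le> norm (inner2 (y * a) a)" by (rule complex_Re_le_cmod)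
  also have "\<dots> \<le> (\<Sum>\<^sub>\<infinity>h. norm (rep y h) * (\<Sum>\<^sub>\<infinity>g. norm (rep a (- h + g)) * norm (rep a g)))"
    unfolding inner2_as_sum rep_times by (rule conv_pairing_abs_bound[OF l1_rep l1_rep l1_rep])
  also have "\<dots> \<le> (\<Sum>\<^sub>\<infinity>h. norm (rep y h) * norm2_sq a)"
  proof (rule infsum_le_of_dominated)
    show "(\<lambda>h. norm (rep y h) * norm2_sq a) summable_on UNIV"
      using l1_rep[of y] unfolding l1_def by (rule summable_on_cmult_left)
  qed (auto simp: infsum_nonneg norm2_sq_as_sum intro!: mult_left_mono autocorrelation_le l1_rep)
  also have "\<dots> = norm1 y * norm2_sq a"
    by (simp add: norm1_def infsum_cmult_left')
  finally show ?thesis .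
qed

section \<open>Positivity of the trace on idempotents\<close>

lemma geometric_sum_ring: "(1 - r) * (\<Sum>k<N. r ^ k) = 1 - r ^ N" for r :: "'a::ring_1"
proof (induction N)
  case (Suc N)
  have "(1 - r) * (\<Sum>k<Suc N. r ^ k) = (1 - r) * (\<Sum>k<N. r ^ k) + (1 - r) * r ^ N"
    by (simp add: distrib_left)
  also have "\<dots> = 1 - r ^ Suc N" using Suc by (simp add: algebra_simps)
  finally show ?case .
qed simp

text \<open>Identities for two idempotents e, f and s = e + f - 1; they are used with f = e*.\<close>
lemma idempotent_square_identities:
  fixes e f :: "'a::ring_1"
  assumes ee: "e * e = e" and ff: "f * f = f"
  shows "(e + f - 1) * (e + f - 1) = 1 + (e - f) * (f - e)"
    and "e * ((e + f - 1) * (e + f - 1)) = e * f * e"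
    and "((e + f - 1) * (e + f - 1)) * e = e * f * e"
proof -
  have eey: "e * (e * y) = e * y" for y by (simp add: mult.assoc[symmetric] ee)
  have ffy: "f * (f * y) = f * y" for y by (simp add: mult.assoc[symmetric] ff)
  show "(e + f - 1) * (e + f - 1) = 1 + (e - f) * (f - e)"
    by (simp add: algebra_simps ee ff)
  show "e * ((e + f - 1) * (e + f - 1)) = e * f * e"
    by (simp add: algebra_simps ee ff eey ffy)
  show "((e + f - 1) * (e + f - 1)) * e = e * f * e"
    by (simp add: algebra_simps ee ff eey ffy)
qed

lemma one_plus_square_lower_bound:
  "norm2_sq w \<le> Re (inner2 ((1 + x * adj x) * w) w)"
proof -
  have "inner2 ((1 + x * adj x) * w) w = inner2 w w + inner2 (adj x * w) (adj x * w)"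
    by (simp add: distrib_right inner2_plus_left mult.assoc inner2_adj)
  then show ?thesis using norm2_sq_nonneg[of "adj x * w"] by (simp add: norm2_sq_def)
qed

lemma damped_positive:
  assumes "0 \<le> c" "c * norm1 y \<le> 1"
  shows "0 \<le> Re (inner2 ((1 - c *\<^sub>R y) * w) w)"
proof -
  have "c * Re (inner2 (y * w) w) \<le> c * (norm1 y * norm2_sq w)"
    using young_inequality assms(1) by (rule mult_left_mono)
  also have "\<dots> \<le> norm2_sq w"
    using mult_right_mono[OF assms(2) norm2_sq_nonneg] by (simp add: mult.assoc)
  finally show ?thesis
    by (simp add: left_diff_distrib inner2_minus_left inner2_scaleR_left norm2_sq_def)
qed

lemma damped_contraction:
  fixes s :: "'g::group_add l1alg"
  assumes s: "adj s = s" and lower: "\<And>w. norm2_sq w \<le> Re (inner2 (s * s * w) w)"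
    and c: "0 \<le> c" "c * norm1 (s * s) \<le> 1"
  shows "norm2_sq ((1 - c *\<^sub>R (s * s)) * w) \<le> (1 - c) * norm2_sq w"
proof -
  define y where "y = s * s"
  define r where "r = 1 - c *\<^sub>R y"
  have adj_y: "adj y = y" by (simp add: y_def adj_mult s)
  have adj_r: "adj r = r" by (simp add: r_def adj_minus adj_one adj_scaleR adj_y)
  have ry: "r * y = y * r" by (simp add: r_def algebra_simps)
  have inner_r: "inner2 (r * v) u = inner2 v u - complex_of_real c * inner2 (y * v) u" for u v
    by (simp add: r_def left_diff_distrib inner2_minus_left inner2_scaleR_left)
  define P where "P = Re (inner2 (y * w) w)"
  have P: "P = norm2_sq (s * w)"
    by (simp add: P_def norm2_sq_def y_def mult.assoc inner2_adj s)
  have "Re (inner2 (y * (y * w)) w) = norm2_sq (y * w)"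
    by (simp add: norm2_sq_def inner2_adj adj_y)
  also have "\<dots> = Re (inner2 (y * (s * w)) (s * w))"
    by (simp add: norm2_sq_def y_def mult.assoc inner2_adj s)
  also have "\<dots> \<le> norm1 y * P"
    unfolding P by (rule young_inequality)
  finally have "c * c * Re (inner2 (y * (y * w)) w) \<le> c * c * (norm1 y * P)"
    using c(1) by (simp add: mult_left_mono)
  also have "\<dots> \<le> c * P"
    using mult_right_mono[OF c(2) norm2_sq_nonneg[of "s * w"]] c(1) P
    by (simp add: y_def mult_left_mono mult.assoc)
  finally have quad: "c * c * Re (inner2 (y * (y * w)) w) \<le> c * P" .
  have yr: "y * (r * w) = r * (y * w)" by (simp add: mult.assoc[symmetric] ry)
  have expand: "inner2 (r * (r * w)) w = inner2 w w - complex_of_real c * inner2 (y * w) w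
      - complex_of_real c * (inner2 (y * w) w - complex_of_real c * inner2 (y * (y * w)) w)"
    by (simp only: inner_r yr)
  have "norm2_sq (r * w) = Re (inner2 (r * (r * w)) w)"
    by (simp add: norm2_sq_def inner2_adj adj_r)
  also have "\<dots> = norm2_sq w - 2 * c * P + c * c * Re (inner2 (y * (y * w)) w)"
    unfolding expand by (simp add: norm2_sq_def P_def algebra_simps)
  also have "\<dots> \<le> norm2_sq w - c * P" using quad by (simp add: algebra_simps)
  also have "\<dots> \<le> (1 - c) * norm2_sq w"
    using mult_left_mono[OF lower[of w] c(1)] by (simp add: P_def y_def algebra_simps)
  finally show ?thesis by (simp add: r_def y_def)
qed

text \<open>A self-adjoint element with non-negative quadratic form has all its powers
  non-negative: even powers are squares, odd powers are r conjugated by a power.\<close>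
lemma positive_powers:
  fixes r e :: "'g::group_add l1alg"
  assumes adj_r: "adj r = r" and pos: "\<And>w. 0 \<le> Re (inner2 (r * w) w)"
  shows "0 \<le> Re (inner2 (r ^ k * e) e)"
proof (cases "even k")
  case True
  then obtain j where "k = 2 * j" using evenE by blast
  then have "r ^ k * e = r ^ j * (r ^ j * e)" by (simp add: mult_2 power_add mult.assoc)
  then have "inner2 (r ^ k * e) e = inner2 (r ^ j * e) (r ^ j * e)"
    by (simp add: inner2_adj adj_power adj_r)
  then show ?thesis using norm2_sq_nonneg[of "r ^ j * e"] by (simp add: norm2_sq_def)
next
  case False
  then obtain j where "k = 2 * j + 1" using oddE by blast
  then have "k = j + (Suc 0 + j)" by simp
  then have "r ^ k * e = r ^ j * (r * (r ^ j * e))"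
    by (simp add: power_add mult.assoc[symmetric] power_commutes)
  then have "inner2 (r ^ k * e) e = inner2 (r * (r ^ j * e)) (r ^ j * e)"
    by (simp add: inner2_adj adj_power adj_r)
  then show ?thesis using pos by simp
qed

lemma contraction_powers:
  fixes r :: "'g::group_add l1alg"
  assumes contr: "\<And>w. norm2_sq (r * w) \<le> q * norm2_sq w" and q: "0 \<le> q"
  shows "norm2_sq (r ^ N * w) \<le> q ^ N * norm2_sq w"
proof (induction N)
  case (Suc N)
  have "norm2_sq (r ^ Suc N * w) \<le> q * norm2_sq (r ^ N * w)"
    using contr by (simp add: mult.assoc)
  also have "\<dots> \<le> q * (q ^ N * norm2_sq w)" using Suc q by (rule mult_left_mono)
  finally show ?case by simp
qed simp

lemma damped_trace_identity:
  fixes e y :: "'g::group_add l1alg" and c :: real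
  assumes ee: "e * e = e" and ey: "e * y = e * adj e * e" and ye: "y * e = e * adj e * e"
  defines "r \<equiv> 1 - c *\<^sub>R y"
  shows "tau e - tau (r ^ N * e) = complex_of_real c * (\<Sum>k<N. inner2 (r ^ k * e) e)"
proof -
  define Q where "Q = (\<Sum>k<N. r ^ k)"
  have "r * e = e * r" by (simp add: r_def algebra_simps ey ye)
  then have Qe: "Q * e = e * Q"
    by (simp add: Q_def sum_distrib_left sum_distrib_right power_commuting_commutes)
  have "e * (1 - r ^ N) = e * ((1 - r) * Q)" by (simp add: Q_def geometric_sum_ring)
  also have "\<dots> = c *\<^sub>R (e * adj e * e * Q)" by (simp add: r_def mult.assoc[symmetric] ey)
  finally have geometric: "e * (1 - r ^ N) = c *\<^sub>R (e * adj e * e * Q)" .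
  have "tau e - tau (r ^ N * e) = tau (e * (1 - r ^ N))"
    by (simp add: right_diff_distrib tau_minus tau_commute[of "r ^ N" e])
  also have "\<dots> = complex_of_real c * tau (e * adj e * e * Q)"
    by (simp only: geometric tau_scaleR)
  also have "tau (e * adj e * e * Q) = tau ((e * Q) * (e * adj e))"
    using tau_commute[of "e * adj e" "e * Q"] by (simp add: mult.assoc)
  also have "\<dots> = tau (Q * e * adj e)"
    by (simp add: Qe[symmetric] mult.assoc[symmetric]) (simp add: mult.assoc ee)
  also have "\<dots> = (\<Sum>k<N. inner2 (r ^ k * e) e)"
    by (simp add: Q_def inner2_def sum_distrib_right tau_sum)
  finally show ?thesis .
qed

text \<open>Lower bound from the trace identity when tau(e) = 0: all terms <r^k e, e> are
  non-negative and the first one is |e|_2^2, so c |e|_2^2 \<le> |tau(r^(N+1) e)|.\<close>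
lemma damped_trace_lower_bound:
  fixes e y :: "'g::group_add l1alg" and c :: real
  assumes ee: "e * e = e" and tau_e: "tau e = 0"
    and ey: "e * y = e * adj e * e" and ye: "y * e = e * adj e * e" and c: "0 \<le> c"
  defines "r \<equiv> 1 - c *\<^sub>R y"
  assumes adj_r: "adj r = r" and pos: "\<And>w. 0 \<le> Re (inner2 (r * w) w)"
  shows "c * norm2_sq e \<le> norm (tau (r ^ Suc N * e))"
proof -
  have "(\<Sum>k<Suc N. Re (inner2 (r ^ k * e) e))
      = norm2_sq e + (\<Sum>k\<in>{..<Suc N} - {0}. Re (inner2 (r ^ k * e) e))"
    by (subst sum.remove[of _ 0]) (auto simp: norm2_sq_def)
  moreover have "0 \<le> (\<Sum>k\<in>{..<Suc N} - {0}. Re (inner2 (r ^ k * e) e))"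
    by (rule sum_nonneg) (rule positive_powers[OF adj_r pos])
  ultimately have "c * norm2_sq e \<le> c * (\<Sum>k<Suc N. Re (inner2 (r ^ k * e) e))"
    using c by (simp add: mult_left_mono)
  also have "\<dots> = Re (complex_of_real c * (\<Sum>k<Suc N. inner2 (r ^ k * e) e))"
    by (simp add: Re_sum)
  also have "\<dots> = - Re (tau (r ^ Suc N * e))"
    using damped_trace_identity[OF ee ey ye, of c "Suc N", folded r_def] tau_e
    by (metis diff_0 uminus_complex.sel(1))
  also have "\<dots> \<le> norm (tau (r ^ Suc N * e))" by (metis abs_Re_le_cmod abs_le_D2)
  finally show ?thesis .
qed

text \<open>Kaplansky's theorem for l1(G): an idempotent with vanishing trace is zero.  The
  lower bound above is squared and compared with the decay of |r^N e|_2.\<close>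
theorem idempotent_trace_zero:
  fixes e :: "'g::group_add l1alg"
  assumes ee: "e * e = e" and tau_e: "tau e = 0"
  shows "e = 0"
proof -
  define s where "s = e + adj e - 1"
  define y where "y = s * s"
  have "adj e * adj e = adj e" by (metis ee adj_mult)
  note ids = idempotent_square_identities[OF ee this, folded s_def y_def]
  have adj_s: "adj s = s" by (simp add: s_def adj_plus adj_minus adj_one adj_adj add.commute)
  have "y = 1 + (e - adj e) * adj (e - adj e)"
    by (simp add: ids(1) adj_minus adj_adj)
  then have lower: "norm2_sq w \<le> Re (inner2 (s * s * w) w)" for w
    using one_plus_square_lower_bound by (metis y_def)
  define c where "c = 1 / max 1 (norm1 y)"
  have c: "0 < c" "c \<le> 1" "c * norm1 y \<le> 1" by (auto simp: c_def field_simps)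
  define r where "r = 1 - c *\<^sub>R y"
  have adj_r: "adj r = r"
    by (simp add: r_def y_def adj_minus adj_one adj_scaleR adj_mult adj_s)
  have pos: "0 \<le> Re (inner2 (r * w) w)" for w
    unfolding r_def using c by (intro damped_positive) auto
  have decay: "norm2_sq (r ^ N * e) \<le> (1 - c) ^ N * norm2_sq e" for N
    using damped_contraction[OF adj_s lower] c
    by (intro contraction_powers) (auto simp: r_def y_def)
  have bound: "(c * norm2_sq e)\<^sup>2 \<le> (1 - c) ^ Suc N * norm2_sq e" for N
  proof -
    have "(c * norm2_sq e)\<^sup>2 \<le> (norm (tau (r ^ Suc N * e)))\<^sup>2"
      using damped_trace_lower_bound[OF ee tau_e ids(2,3), of c, folded r_def, OF _ adj_r pos]
        c(1) norm2_sq_nonneg[of e]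
      by (simp add: power_mono)
    also have "\<dots> \<le> norm2_sq (r ^ Suc N * e)" by (rule tau_square_le)
    also have "\<dots> \<le> (1 - c) ^ Suc N * norm2_sq e" by (rule decay)
    finally show ?thesis .
  qed
  have "(\<lambda>N. (1 - c) ^ Suc N * norm2_sq e) \<longlonglongrightarrow> 0 * norm2_sq e"
    by (intro tendsto_mult_right LIMSEQ_Suc LIMSEQ_power_zero) (use c in auto)
  then have "(c * norm2_sq e)\<^sup>2 \<le> 0"
    using bound by (intro LIMSEQ_le_const) auto
  then have "norm2_sq e = 0" using c(1) by simp
  then show "e = 0" by (rule norm2_sq_eq_0)
qed

text \<open>Consequently an idempotent whose trace equals its augmentation is 0 or 1: the
  augmentation is multiplicative, so it is 0 or 1, and the case 1 reduces to 1 - e.\<close>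
corollary idempotent_trivial_if_trace_eq_augmentation:
  fixes e :: "'g::group_add l1alg"
  assumes ee: "e * e = e" and tau_aug: "tau e = augmentation e"
  shows "e = 0 \<or> e = 1"
proof -
  have "augmentation e = augmentation e * augmentation e"
    using ee augmentation_mult[of e e] by simp
  then have "tau e = 0 \<or> tau e = 1" using tau_aug by (metis mult_cancel_left1 mult_eq_0_iff)
  then show ?thesis
  proof
    assume "tau e = 0"
    then show ?thesis using idempotent_trace_zero[OF ee] by simp
  next
    assume "tau e = 1"
    then have "tau (1 - e) = 0" by (simp add: tau_minus tau_one)
    moreover have "(1 - e) * (1 - e) = 1 - e" by (simp add: algebra_simps ee)
    ultimately have "1 - e = 0" using idempotent_trace_zero by blast
    then show ?thesis by simp
  qed
qed

section \<open>Conjugacy classes and class sums\<close>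

lemma conj_class_self: "g \<in> conj_class (g::'g::group_add)"
  unfolding conj_class_def by (rule CollectI, rule exI[of _ 0]) simp

lemma conj_class_zero: "conj_class (0::'g::group_add) = {0}"
  by (auto simp: conj_class_def)

lemma conj_class_eq:
  assumes "g \<in> conj_class (x::'g::group_add)"
  shows "conj_class g = conj_class x"
proof -
  obtain k where g: "g = k + x - k" using assms by (auto simp: conj_class_def)
  have "m + g - m = (m + k) + x - (m + k)" for m
    by (simp only: g diff_conv_add_uminus add.assoc minus_add add_minus_cancel)
  moreover have "m + x - m = (m + - k) + g - (m + - k)" for m
    by (simp only: g diff_conv_add_uminus add.assoc minus_add minus_minus add_minus_cancel
        minus_add_cancel)
  ultimately show ?thesis unfolding conj_class_def by blast
qed

lemma bij_conj_classes:
  "bij_betw (\<lambda>g::'g::group_add. (conj_class g, g)) UNIV (Sigma conj_classes (\<lambda>C. C))"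
proof (rule bij_betwI[where g=snd])
  show "(\<lambda>g. (conj_class g, g)) \<in> UNIV \<rightarrow> Sigma conj_classes (\<lambda>C. C)"
    by (auto simp: conj_classes_def conj_class_self)
  fix p assume "p \<in> Sigma conj_classes (\<lambda>C. C)"
  then obtain x g where "p = (conj_class x, g)" "g \<in> conj_class x"
    by (auto simp: conj_classes_def)
  then show "(conj_class (snd p), snd p) = p" using conj_class_eq by simp
qed auto

lemma infsum_eq_coeff_zero_if_class_sums_vanish:
  fixes a :: "'g::group_add \<Rightarrow> complex"
  assumes a: "l1 a"
    and vanish: "\<And>C. C \<in> conj_classes \<Longrightarrow> C \<noteq> {0} \<Longrightarrow> (\<Sum>\<^sub>\<infinity>g\<in>C. a g) = 0"
  shows "(\<Sum>\<^sub>\<infinity>g. a g) = a 0"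
proof -
  have "a summable_on UNIV"
    using a unfolding l1_def by (rule Infinite_Sum.abs_summable_summable)
  then have summable: "(\<lambda>p. a (snd p)) summable_on Sigma conj_classes (\<lambda>C. C)"
    using summable_on_reindex_bij_betw[OF bij_conj_classes, of "\<lambda>p. a (snd p)"] by simp
  have "(\<Sum>\<^sub>\<infinity>g. a g) = (\<Sum>\<^sub>\<infinity>p\<in>Sigma conj_classes (\<lambda>C. C). a (snd p))"
    using infsum_reindex_bij_betw[OF bij_conj_classes, of "\<lambda>p. a (snd p)"] by simp
  also have "\<dots> = (\<Sum>\<^sub>\<infinity>C\<in>conj_classes. \<Sum>\<^sub>\<infinity>g\<in>C. a g)"
    using infsum_Sigma'_banach[of "\<lambda>C g. a g" conj_classes "\<lambda>C. C"] summable
    by (simp add: case_prod_unfold)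
  also have "\<dots> = (\<Sum>\<^sub>\<infinity>C\<in>{{0::'g}}. \<Sum>\<^sub>\<infinity>g\<in>C. a g)"
    by (rule infsum_cong_neutral)
       (auto simp: vanish conj_classes_def conj_class_zero[symmetric])
  finally show ?thesis by simp
qed

text \<open>In a torsion-free group FC(G) consists of the trivial class only, so the hypothesis
  on the Hattori-Stallings trace, applied to the 1x1 idempotent matrix (a), says that all
  non-trivial class sums of a vanish.\<close>
lemma class_sums_of_idempotent_vanish:
  fixes a :: "'g::group_add \<Rightarrow> complex"
  assumes torsion_free: "torsion_free TYPE('g)"
    and HS: "\<forall>n (E :: nat \<Rightarrow> nat \<Rightarrow> 'g \<Rightarrow> complex). idem_mat n E \<longrightarrow> in_FC_sum (HS1 n E)"
    and a: "l1 a" "conv a a = a"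
    and C: "C \<in> conj_classes" "C \<noteq> {0}"
  shows "(\<Sum>\<^sub>\<infinity>g\<in>C. a g) = 0"
proof (rule ccontr)
  assume nonzero: "(\<Sum>\<^sub>\<infinity>g\<in>C. a g) \<noteq> 0"
  define E :: "nat \<Rightarrow> nat \<Rightarrow> 'g \<Rightarrow> complex" where "E = (\<lambda>i j. a)"
  have "idem_mat 1 E" by (simp add: idem_mat_def E_def mat_mult_def a)
  then have "in_FC_sum (HS1 1 E)" using HS by blast
  moreover have "HS1 1 E C \<noteq> 0" using nonzero by (simp add: HS1_def E_def)
  ultimately have "C \<in> FC" using C(1) unfolding in_FC_sum_def by blast
  then obtain x where "C = conj_class x" "finite_order x" by (auto simp: FC_def)
  moreover from \<open>finite_order x\<close> torsion_free have "x = 0"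
    unfolding finite_order_def torsion_free_def by blast
  ultimately show False using C(2) by (simp add: conj_class_zero)
qed

theorem proposition6p1:
  fixes a :: "'g::group_add \<Rightarrow> complex"
  assumes "torsion_free TYPE('g)"
    and "\<forall>n (E :: nat \<Rightarrow> nat \<Rightarrow> 'g \<Rightarrow> complex). idem_mat n E \<longrightarrow> in_FC_sum (HS1 n E)"
    and "l1 a"
    and "conv a a = a"
  shows "a = (\<lambda>_. 0) \<or> a = l1_one"
proof -
  define e :: "'g l1alg" where "e = Abs_l1alg a"
  have rep_e: "rep e = a" unfolding e_def using assms(3) by (simp add: Abs_l1alg_inverse)
  have "e * e = e" by (rule rep_inject[THEN iffD1]) (simp add: rep_times rep_e assms(4))
  moreover have "tau e = augmentation e"
    using infsum_eq_coeff_zero_if_class_sums_vanish[OF assms(3)]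
      class_sums_of_idempotent_vanish[OF assms]
    by (simp add: tau_def augmentation_def rep_e)
  ultimately have "e = 0 \<or> e = 1" by (rule idempotent_trivial_if_trace_eq_augmentation)
  then show ?thesis using rep_e by (auto simp: fun_eq_iff rep_zero rep_one)
qed

end
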